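(* Let $G$ and $H$ be graphs on $m$ and $n$ vertices respectively, and let $u$ be a vertex of $G$ whose degree $d_u$ in $G$ satisfies $d_u\notin\sigma_u(G)$. Then $\uparrow^{2}(G\vee H)$ has Laplacian perfect state transfer between $(0,u)$ and $(1,u)$ if and only if $\sigma_u(G)\subset\mathbb{Z}$ and one of the following holds: (1) $G$ is connected, $\nu_2(m+n)>\nu_2(d_u+n)$, and $\nu_2(\lambda+n)>\nu_2(d_u+n)$ for all $\lambda\in\sigma_u(G)\setminus \{0\}$; (2) $G$ is disconnected, $u$ is not an isolated vertex of $G$, $\nu_2(n)>\nu_2(d_u+n)$, $\nu_2(m+n)>\nu_2(d_u+n)$, and $\nu_2(\lambda+n)>\nu_2(d_u+n)$ for all $\lambda\in\sigma_u(G)\setminus \{0\}$. Moreover, the minimum time of Laplacian perfect state transfer is $\tau = \frac{\pi}{2h}$ with $h=\gcd(S)$, where $S=\{\lambda+n:\lambda\in(\sigma_u(G)\setminus \{0\})\cup \{d_u,m\}\}$ if (1) holds, and $S=\{\lambda+n:\lambda\in\sigma_u(G)\cup \{d_u,m\}\}$ otherwise.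
   Context: All graphs are simple, undirected and unweighted. The join $G\vee H$ is obtained from the disjoint union of $G$ and $H$ by adding all edges between $V(G)$ and $V(H)$. $\sigma_u(G)$ is the Laplacian eigenvalue support of $u$ in $G$: the set of distinct eigenvalues $\lambda$ of the Laplacian $L=D-A$ of $G$ with $E_\lambda\mathbf{e}_u\neq\mathbf{0}$, $E_\lambda$ the orthogonal projection onto the $\lambda$-eigenspace. For a nonzero integer $n$, $\nu_2(n)$ is the exponent of the largest power of $2$ dividing $n$. The blow-up $\uparrow^{2}X$ has vertex set $\mathbb{Z}_2\times V(X)$, with $(l,a)\sim(m,b)$ iff $a\sim b$ in $X$. A graph with Laplacian $L$ has Laplacian perfect state transfer between vertices $a,b$ at time $\tau>0$ if $\exp(i\tau L)\mathbf{e}_a=\gamma\mathbf{e}_b$ for some $\gamma\in\mathbb{C}$. *)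

theory Defs
  imports "HOL-Analysis.Analysis"
begin

definition simple_graph :: "('v \<Rightarrow> 'v \<Rightarrow> bool) \<Rightarrow> bool" where
  "simple_graph E \<longleftrightarrow> (\<forall>x y. E x y \<longrightarrow> E y x) \<and> (\<forall>x. \<not> E x x)"

definition degree :: "('v \<Rightarrow> 'v \<Rightarrow> bool) \<Rightarrow> 'v \<Rightarrow> nat" where
  "degree E u = card {v. E u v}"

definition connected_graph :: "('v \<Rightarrow> 'v \<Rightarrow> bool) \<Rightarrow> bool" where
  "connected_graph E \<longleftrightarrow> (\<forall>x y. E\<^sup>*\<^sup>* x y)"

definition isolated :: "('v \<Rightarrow> 'v \<Rightarrow> bool) \<Rightarrow> 'v \<Rightarrow> bool" where
  "isolated E u \<longleftrightarrow> (\<forall>v. \<not> E u v)"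

fun graph_join :: "('a \<Rightarrow> 'a \<Rightarrow> bool) \<Rightarrow> ('b \<Rightarrow> 'b \<Rightarrow> bool) \<Rightarrow> ('a + 'b) \<Rightarrow> ('a + 'b) \<Rightarrow> bool" where
  "graph_join G H (Inl x) (Inl y) = G x y"
| "graph_join G H (Inr x) (Inr y) = H x y"
| "graph_join G H (Inl x) (Inr y) = True"
| "graph_join G H (Inr x) (Inl y) = True"

text \<open>Blow-up by 2: vertex set Z_2 x V(X), Z_2 represented by bool (False = 0, True = 1).\<close>
definition blowup2 :: "('v \<Rightarrow> 'v \<Rightarrow> bool) \<Rightarrow> (bool \<times> 'v) \<Rightarrow> (bool \<times> 'v) \<Rightarrow> bool" where
  "blowup2 X p q \<longleftrightarrow> X (snd p) (snd q)"

definition laplacian :: "('v::finite \<Rightarrow> 'v \<Rightarrow> bool) \<Rightarrow> real^'v^'v" where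
  "laplacian E = (\<chi> i j. (if i = j then real (degree E i) else 0) - (if E i j then 1 else 0))"

definition eigenspace :: "real^'v^'v \<Rightarrow> real \<Rightarrow> (real^'v) set" where
  "eigenspace M lam = {x. M *v x = lam *\<^sub>R x}"

definition orth_proj :: "(real^'v::finite) set \<Rightarrow> real^'v \<Rightarrow> real^'v" where
  "orth_proj S x = (THE p. p \<in> S \<and> (\<forall>y\<in>S. (x - p) \<bullet> y = 0))"

definition eig_support :: "('v::finite \<Rightarrow> 'v \<Rightarrow> bool) \<Rightarrow> 'v \<Rightarrow> real set" where
  "eig_support E u = {lam. (\<exists>x. x \<noteq> 0 \<and> laplacian E *v x = lam *\<^sub>R x)
       \<and> orth_proj (eigenspace (laplacian E) lam) (axis u 1) \<noteq> 0}"

definition cmat_vec :: "real^'v^'v \<Rightarrow> complex^'v \<Rightarrow> complex^'v" where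
  "cmat_vec M v = (\<chi> i. \<Sum>j\<in>UNIV. complex_of_real (M $ i $ j) * v $ j)"

definition exp_itM :: "real \<Rightarrow> real^'v^'v \<Rightarrow> complex^'v \<Rightarrow> complex^'v" where
  "exp_itM t M v = (\<Sum>k. ((\<i> * complex_of_real t) ^ k / of_nat (fact k)) *s ((cmat_vec M ^^ k) v))"

definition lap_pst :: "('v::finite \<Rightarrow> 'v \<Rightarrow> bool) \<Rightarrow> 'v \<Rightarrow> 'v \<Rightarrow> real \<Rightarrow> bool" where
  "lap_pst E a b t \<longleftrightarrow> t > 0 \<and> (\<exists>\<gamma>::complex. exp_itM t (laplacian E) (axis a 1) = \<gamma> *s axis b 1)"

definition nu2 :: "int \<Rightarrow> nat" where
  "nu2 k = multiplicity (2::int) k"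

end

(*
  Let X = G \<or> H and D = d\<^sub>u + n, the degree of u in X. In the blow-up, e_(0,u) splits into a part
  that is an eigenvector for 2D and a part that evolves like e_u in X at twice the time. Hence
  there is PST at time t iff exp(2it\<mu>) = -exp(2itD) for all \<mu> \<in> \<sigma>_u(X); as 0 \<in> \<sigma>_u(X), this says
  that 2tD is an odd and t\<mu> an arbitrary multiple of \<pi> for the nonzero \<mu> \<in> \<sigma>_u(X). Such a t
  makes these \<mu> rational, hence integers (they are eigenvalues of an integer matrix), and
  comparing 2-adic valuations shows that t exists iff \<nu>\<^sub>2(\<mu>) > \<nu>\<^sub>2(D) for all of them, the least
  such t being \<pi>/(2 gcd(D, \<sigma>_u(X) - 0)). Finally, decomposing e_u along eigenvectors of L(X) built
  from those of L(G) gives \<sigma>_u(X) = {0, m+n} \<union> (\<sigma>_u(G) - 0 + n) \<union> ({n} if G is disconnected).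
*)
theory Submission
  imports Defs "HOL-Number_Theory.Cong"
begin

section \<open>Eigenprojections of symmetric matrices\<close>

definition symmetric_matrix :: "'a::comm_semiring_1^'n^'n \<Rightarrow> bool" where
  "symmetric_matrix M \<longleftrightarrow> transpose M = M"

lemma symmetric_matrix_inner:
  fixes M :: "real^'n^'n"
  assumes "symmetric_matrix M"
  shows "(M *v x) \<bullet> y = x \<bullet> (M *v y)"
  by (metis assms dot_lmul_matrix symmetric_matrix_def vector_transpose_matrix)

lemma eigenvectors_orthogonal:
  fixes M :: "real^'n^'n"
  assumes "symmetric_matrix M" "M *v x = a *\<^sub>R x" "M *v y = b *\<^sub>R y" "a \<noteq> b"
  shows "x \<bullet> y = 0"
proof -
  have "a * (x \<bullet> y) = b * (x \<bullet> y)"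
    using symmetric_matrix_inner[OF assms(1), of x y] assms(2,3) by simp
  with assms(4) show ?thesis by simp
qed

lemma subspace_eigenspace: "subspace (eigenspace M l)"
  unfolding subspace_def eigenspace_def
  by (simp add: matrix_vector_right_distrib matrix_vector_mult_scaleR scaleR_right_distrib)

lemma ex1_orth_proj:
  fixes S :: "(real^'n) set"
  assumes "subspace S"
  shows "\<exists>!p. p \<in> S \<and> (\<forall>y\<in>S. (x - p) \<bullet> y = 0)"
proof -
  obtain p q where p: "p \<in> span S" and q: "\<And>w. w \<in> span S \<Longrightarrow> orthogonal q w" and "x = p + q"
    using orthogonal_subspace_decomp_exists by blast
  have "p \<in> S" using p assms by (metis span_eq_iff)
  moreover have "\<forall>y\<in>S. (x - p) \<bullet> y = 0"
    using q \<open>x = p + q\<close> by (simp add: orthogonal_def span_base)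
  moreover have "p' = p" if "p' \<in> S" "\<forall>y\<in>S. (x - p') \<bullet> y = 0" for p'
  proof -
    have "p - p' \<in> S" using assms \<open>p \<in> S\<close> that(1) by (simp add: subspace_diff)
    then have "(x - p') \<bullet> (p - p') - (x - p) \<bullet> (p - p') = 0"
      using that(2) \<open>\<forall>y\<in>S. (x - p) \<bullet> y = 0\<close> by simp
    then have "(p - p') \<bullet> (p - p') = 0" by (simp add: inner_diff_left inner_diff_right inner_commute)
    then show ?thesis by simp
  qed
  ultimately show ?thesis by blast
qed

lemma orth_proj_in:
  fixes S :: "(real^'n) set"
  assumes "subspace S" shows "orth_proj S x \<in> S"
  using theI'[OF ex1_orth_proj[OF assms, of x]] unfolding orth_proj_def by blast

lemma orth_proj_orthogonal:
  fixes S :: "(real^'n) set"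
  assumes "subspace S" "y \<in> S" shows "(x - orth_proj S x) \<bullet> y = 0"
  using theI'[OF ex1_orth_proj[OF assms(1), of x]] assms(2) unfolding orth_proj_def by blast

lemma orth_proj_eqI:
  fixes S :: "(real^'n) set"
  assumes "subspace S" "p \<in> S" "\<And>y. y \<in> S \<Longrightarrow> (x - p) \<bullet> y = 0"
  shows "orth_proj S x = p"
  unfolding orth_proj_def using assms by (intro the1_equality[OF ex1_orth_proj]) auto

lemma linear_orth_proj:
  fixes S :: "(real^'n) set"
  assumes "subspace S" shows "linear (orth_proj S)"
proof (rule linearI)
  fix x y :: "real^'n" and c :: real
  show "orth_proj S (x + y) = orth_proj S x + orth_proj S y"
  proof (rule orth_proj_eqI[OF assms])
    fix z assume "z \<in> S"
    then show "(x + y - (orth_proj S x + orth_proj S y)) \<bullet> z = 0"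
      using orth_proj_orthogonal[OF assms, of z x] orth_proj_orthogonal[OF assms, of z y]
      by (simp add: inner_diff_left inner_add_left)
  qed (simp add: assms subspace_add orth_proj_in)
  show "orth_proj S (c *\<^sub>R x) = c *\<^sub>R orth_proj S x"
  proof (rule orth_proj_eqI[OF assms])
    fix z assume "z \<in> S"
    then show "(c *\<^sub>R x - c *\<^sub>R orth_proj S x) \<bullet> z = 0"
      using orth_proj_orthogonal[OF assms, of z x] by (simp add: inner_diff_left)
  qed (simp add: assms subspace_scale orth_proj_in)
qed

abbreviation eigenproj :: "real^'n^'n \<Rightarrow> real \<Rightarrow> real^'n \<Rightarrow> real^'n" where
  "eigenproj M l \<equiv> orth_proj (eigenspace M l)"

lemma eigenproj_eigenvector: "M *v eigenproj M l v = l *\<^sub>R eigenproj M l v"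
  using orth_proj_in[OF subspace_eigenspace] unfolding eigenspace_def by blast

lemma eigenproj_of_eigenvector:
  fixes M :: "real^'n^'n"
  assumes "symmetric_matrix M" "M *v y = mu *\<^sub>R y"
  shows "eigenproj M l y = (if mu = l then y else 0)"
proof (intro orth_proj_eqI subspace_eigenspace)
  show "(if mu = l then y else 0) \<in> eigenspace M l"
    using assms(2) by (simp add: eigenspace_def)
  fix z assume "z \<in> eigenspace M l"
  then show "(y - (if mu = l then y else 0)) \<bullet> z = 0"
    using eigenvectors_orthogonal[OF assms] by (auto simp: eigenspace_def)
qed

lemma eigenproj_sum_eigenvectors:
  fixes M :: "real^'n^'n"
  assumes "symmetric_matrix M" "finite J" "\<And>j. j \<in> J \<Longrightarrow> M *v y j = mu j *\<^sub>R y j"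
  shows "eigenproj M l (\<Sum>j\<in>J. y j) = (\<Sum>j | j \<in> J \<and> mu j = l. y j)"
proof -
  have "eigenproj M l (\<Sum>j\<in>J. y j) = (\<Sum>j\<in>J. eigenproj M l (y j))"
    by (simp add: linear_sum[OF linear_orth_proj[OF subspace_eigenspace]])
  also have "\<dots> = (\<Sum>j\<in>J. if mu j = l then y j else 0)"
    using assms by (intro sum.cong refl) (simp add: eigenproj_of_eigenvector)
  also have "\<dots> = (\<Sum>j | j \<in> J \<and> mu j = l. y j)"
    using assms(2) by (simp add: sum.inter_filter)
  finally show ?thesis .
qed

lemma nonneg_eq_0_if_quadratic_nonpos:
  fixes a b :: real
  assumes "\<And>s. 2 * s * a + s\<^sup>2 * b \<le> 0" "a \<ge> 0"
  shows "a = 0"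
proof (rule ccontr)
  assume "a \<noteq> 0"
  define s where "s = a / (\<bar>b\<bar> + 1)"
  have "s > 0" "s * \<bar>b\<bar> < a"
    using \<open>a \<noteq> 0\<close> assms(2) by (auto simp: s_def field_simps)
  then have "0 < s * (2 * a - s * \<bar>b\<bar>)" "s * (s * \<bar>b\<bar>) \<ge> - (s\<^sup>2 * b)"
    using assms(2) by (auto simp: power2_eq_square abs_if)
  then show False
    using assms(1)[of s] by (simp add: algebra_simps power2_eq_square)
qed

lemma rayleigh_quotient_maximum:
  fixes M :: "real^'n^'n" and W :: "(real^'n) set"
  assumes "subspace W" "W \<noteq> {0}"
  obtains v where "v \<in> W" "norm v = 1" "\<And>x. x \<in> W \<Longrightarrow> x \<bullet> (M *v x) \<le> (v \<bullet> (M *v v)) * (x \<bullet> x)"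
proof -
  define K where "K = W \<inter> sphere 0 1"
  obtain w where "w \<in> W" "w \<noteq> 0" using assms subspace_0 by blast
  then have "(1 / norm w) *\<^sub>R w \<in> K" using assms(1) by (auto simp: K_def subspace_scale)
  moreover have "compact K"
    unfolding K_def by (intro closed_Int_compact closed_subspace assms(1) compact_sphere)
  moreover have "continuous_on K (\<lambda>x. x \<bullet> (M *v x))"
    by (intro continuous_on_inner continuous_on_id linear_continuous_on)
      (simp add: linear_conv_bounded_linear[symmetric])
  ultimately obtain v where v: "v \<in> K" and max: "\<And>y. y \<in> K \<Longrightarrow> y \<bullet> (M *v y) \<le> v \<bullet> (M *v v)"
    using continuous_attains_sup[of K] by blast
  have "x \<bullet> (M *v x) \<le> (v \<bullet> (M *v v)) * (x \<bullet> x)" if "x \<in> W" for x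
  proof (cases "x = 0")
    case False
    then have "(1 / norm x) *\<^sub>R x \<in> K" using assms(1) that by (auto simp: K_def subspace_scale)
    from max[OF this] have "(x \<bullet> (M *v x)) / (norm x)\<^sup>2 \<le> v \<bullet> (M *v v)"
      by (simp add: matrix_vector_mult_scaleR power2_eq_square)
    then show ?thesis using False by (simp add: divide_le_eq power2_norm_eq_inner mult.commute)
  qed simp
  with v show thesis using that by (auto simp: K_def)
qed

lemma rayleigh_maximizer_eigenvector:
  fixes M :: "real^'n^'n"
  assumes M: "symmetric_matrix M" and W: "subspace W" and inv: "\<And>x. x \<in> W \<Longrightarrow> M *v x \<in> W"
    and v: "v \<in> W" "norm v = 1"
    and max: "\<And>x. x \<in> W \<Longrightarrow> x \<bullet> (M *v x) \<le> (v \<bullet> (M *v v)) * (x \<bullet> x)"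
  shows "M *v v = (v \<bullet> (M *v v)) *\<^sub>R v"
proof -
  define l where "l = v \<bullet> (M *v v)"
  define w where "w = M *v v - l *\<^sub>R v"
  have vv: "v \<bullet> v = 1" using v(2) by (simp add: dot_square_norm)
  have wW: "w \<in> W" unfolding w_def using inv v W by (auto intro: subspace_diff subspace_scale)
  have wv: "v \<bullet> w = 0"
    using vv by (simp add: w_def l_def inner_diff_right inner_commute)
  have vMw: "v \<bullet> (M *v w) = w \<bullet> w"
    using wv symmetric_matrix_inner[OF M, of v w]
    by (simp add: w_def inner_diff_left inner_diff_right inner_commute algebra_simps)
  have "2 * s * (w \<bullet> w) + s\<^sup>2 * (w \<bullet> (M *v w) - l * (w \<bullet> w)) \<le> 0" for s
  proof -
    have "l + 2 * s * (w \<bullet> w) + s\<^sup>2 * (w \<bullet> (M *v w))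
        = (v + s *\<^sub>R w) \<bullet> (M *v (v + s *\<^sub>R w))"
      using vMw symmetric_matrix_inner[OF M, of w v]
      by (simp add: l_def matrix_vector_right_distrib matrix_vector_mult_scaleR inner_add_left
          inner_add_right inner_commute power2_eq_square algebra_simps)
    also have "\<dots> \<le> l * ((v + s *\<^sub>R w) \<bullet> (v + s *\<^sub>R w))"
      unfolding l_def using W v wW by (intro max subspace_add subspace_scale)
    also have "\<dots> = l * (1 + s\<^sup>2 * (w \<bullet> w))"
      using vv wv by (simp add: inner_add_left inner_add_right inner_commute power2_eq_square)
    finally show ?thesis by (simp add: algebra_simps)
  qed
  then have "w \<bullet> w = 0" by (rule nonneg_eq_0_if_quadratic_nonpos) simp
  then show ?thesis by (simp add: w_def l_def)
qed

lemma symmetric_matrix_invariant_subspace_eigenvector: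
  fixes M :: "real^'n^'n"
  assumes "symmetric_matrix M" "subspace W" "\<And>x. x \<in> W \<Longrightarrow> M *v x \<in> W" "W \<noteq> {0}"
  obtains v where "v \<in> W" "v \<noteq> 0" "M *v v = (v \<bullet> (M *v v)) *\<^sub>R v"
proof -
  obtain v where "v \<in> W" "norm v = 1" "\<And>x. x \<in> W \<Longrightarrow> x \<bullet> (M *v x) \<le> (v \<bullet> (M *v v)) * (x \<bullet> x)"
    using rayleigh_quotient_maximum[OF assms(2,4)] by blast
  with rayleigh_maximizer_eigenvector[OF assms(1-3)] that show thesis by force
qed

(* The orthogonal complement of the span of the eigenvectors is M-invariant, so by the
   previous lemma it is {0}. *)

lemma span_eigenvectors:
  fixes M :: "real^'n^'n"
  assumes M: "symmetric_matrix M"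
  shows "v \<in> span {x. \<exists>l. M *v x = l *\<^sub>R x}"
proof -
  define U where "U = span {x. \<exists>l. M *v x = l *\<^sub>R x}"
  have U_invariant: "M *v x \<in> U" if "x \<in> U" for x
    using that unfolding U_def
  proof (induction rule: span_induct_alt)
    case (step c x y)
    then obtain l where "M *v x = l *\<^sub>R x" by blast
    with step show ?case
      by (simp add: matrix_vector_right_distrib matrix_vector_mult_scaleR span_add span_scale span_base)
  qed (simp add: span_0)
  define W where "W = {z. \<forall>w\<in>U. z \<bullet> w = 0}"
  have W: "subspace W" unfolding W_def subspace_def by (auto simp: inner_add_left)
  have W_invariant: "M *v z \<in> W" if "z \<in> W" for z
    using that U_invariant symmetric_matrix_inner[OF M, of z] by (simp add: W_def)
  have "W = {0}"
  proof (rule ccontr)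
    assume "W \<noteq> {0}"
    then obtain e where "e \<in> W" "e \<noteq> 0" "M *v e = (e \<bullet> (M *v e)) *\<^sub>R e"
      using symmetric_matrix_invariant_subspace_eigenvector[OF M W W_invariant] by blast
    then have "e \<in> U" unfolding U_def by (intro span_base) blast
    with \<open>e \<in> W\<close> have "e \<bullet> e = 0" by (simp add: W_def)
    with \<open>e \<noteq> 0\<close> show False by simp
  qed
  obtain y z where "y \<in> span U" "\<And>w. w \<in> span U \<Longrightarrow> orthogonal z w" "v = y + z"
    using orthogonal_subspace_decomp_exists by blast
  then have "z \<in> W" by (simp add: W_def orthogonal_def span_base)
  with \<open>W = {0}\<close> \<open>y \<in> span U\<close> \<open>v = y + z\<close> show ?thesis by (simp add: U_def span_span)
qed

lemma eigenvector_decomposition: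
  fixes M :: "real^'n^'n"
  assumes "symmetric_matrix M"
  obtains L f where "finite L" "\<And>l. M *v f l = l *\<^sub>R f l" "v = (\<Sum>l\<in>L. f l)"
proof -
  have "\<exists>L f. finite L \<and> (\<forall>l. M *v f l = l *\<^sub>R f l) \<and> v = (\<Sum>l\<in>L. f l)"
    using span_eigenvectors[OF assms, of v]
  proof (induction rule: span_induct_alt)
    case base
    show ?case by (intro exI[of _ "{}"] exI[of _ "\<lambda>_. 0"]) simp
  next
    case (step c x y)
    then obtain l0 L f where x: "M *v x = l0 *\<^sub>R x"
      and L: "finite L" "\<forall>l. M *v f l = l *\<^sub>R f l" "y = (\<Sum>l\<in>L. f l)" by blast
    define g where "g l = (if l \<in> L then f l else 0) + (if l = l0 then c *\<^sub>R x else 0)" for l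
    have "\<forall>l. M *v g l = l *\<^sub>R g l"
      using L(2) x by (simp add: g_def matrix_vector_right_distrib matrix_vector_mult_scaleR scaleR_right_distrib)
    moreover have "c *\<^sub>R x + y = (\<Sum>l\<in>insert l0 L. g l)"
      using L(1,3) by (simp add: g_def sum.distrib sum.If_cases Int_absorb1 subset_insertI)
    ultimately show ?case using L(1) by blast
  qed
  with that show thesis by blast
qed

definition spectral_support :: "real^'n^'n \<Rightarrow> real^'n \<Rightarrow> real set" where
  "spectral_support M v = {l. eigenproj M l v \<noteq> 0}"

lemma
  fixes M :: "real^'n^'n"
  assumes "symmetric_matrix M"
  shows finite_spectral_support: "finite (spectral_support M v)"
    and sum_eigenproj: "(\<Sum>l\<in>spectral_support M v. eigenproj M l v) = v"
proof -
  obtain L f where L: "finite L" "\<And>l. M *v f l = l *\<^sub>R f l" "v = (\<Sum>l\<in>L. f l)"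
    using eigenvector_decomposition[OF assms] by blast
  have proj: "eigenproj M l v = (if l \<in> L then f l else 0)" for l
  proof -
    have "{j. j \<in> L \<and> j = l} = (if l \<in> L then {l} else {})" by auto
    then show ?thesis using eigenproj_sum_eigenvectors[OF assms L(1), of f id l] L(2,3) by simp
  qed
  then have supp: "spectral_support M v = {l \<in> L. f l \<noteq> 0}"
    by (auto simp: spectral_support_def)
  then show "finite (spectral_support M v)" using L(1) by simp
  have "(\<Sum>l\<in>spectral_support M v. eigenproj M l v) = (\<Sum>l\<in>L. f l)"
    unfolding supp proj using L(1) by (intro sum.mono_neutral_cong_left) auto
  with L(3) show "(\<Sum>l\<in>spectral_support M v. eigenproj M l v) = v" by simp
qed

lemma eig_support_eq_spectral_support:
  "eig_support E u = spectral_support (laplacian E) (axis u 1)"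
  unfolding eig_support_def spectral_support_def using eigenproj_eigenvector by blast

section \<open>The evolution operator on eigenvectors\<close>

definition of_real_vec :: "real^'n \<Rightarrow> complex^'n" where
  "of_real_vec x = (\<chi> i. complex_of_real (x $ i))"

lemma of_real_vec_nth [simp]: "of_real_vec x $ i = complex_of_real (x $ i)"
  by (simp add: of_real_vec_def)

lemma of_real_vec_sum: "of_real_vec (\<Sum>j\<in>J. x j) = (\<Sum>j\<in>J. of_real_vec (x j))"
  by (simp add: vec_eq_iff sum_component)

lemma axis_nth_eq: "axis i x $ j = (if j = i then x else 0)"
  by (simp add: axis_def)

lemma of_real_vec_axis: "of_real_vec (axis i 1) = axis i 1"
  by (simp add: vec_eq_iff axis_def)

lemma cmat_vec_of_real_vec: "cmat_vec M (of_real_vec x) = of_real_vec (M *v x)"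
  by (simp add: vec_eq_iff cmat_vec_def matrix_vector_mult_def)

lemma cmat_vec_sum: "cmat_vec M (\<Sum>j\<in>J. w j) = (\<Sum>j\<in>J. cmat_vec M (w j))"
  by (simp add: vec_eq_iff cmat_vec_def sum_component sum_distrib_left sum.swap[of _ J])

lemma cmat_vec_scale: "cmat_vec M (c *s w) = c *s cmat_vec M w"
  by (simp add: vec_eq_iff cmat_vec_def sum_distrib_left mult_ac)

lemma cmat_vec_power_eigenvectors:
  assumes "\<And>j. j \<in> J \<Longrightarrow> M *v x j = l j *\<^sub>R x j"
  shows "(cmat_vec M ^^ k) (\<Sum>j\<in>J. c j *s of_real_vec (x j))
       = (\<Sum>j\<in>J. (c j * complex_of_real (l j) ^ k) *s of_real_vec (x j))"
proof (induction k)
  case (Suc k)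
  have "(cmat_vec M ^^ Suc k) (\<Sum>j\<in>J. c j *s of_real_vec (x j))
      = (\<Sum>j\<in>J. (c j * complex_of_real (l j) ^ k) *s cmat_vec M (of_real_vec (x j)))"
    using Suc by (simp add: cmat_vec_sum cmat_vec_scale)
  also have "\<dots> = (\<Sum>j\<in>J. (c j * complex_of_real (l j) ^ Suc k) *s of_real_vec (x j))"
    using assms by (intro sum.cong) (auto simp: cmat_vec_of_real_vec vec_eq_iff mult_ac)
  finally show ?case .
qed simp

lemma exp_itM_eigenvectors:
  fixes M :: "real^'n^'n"
  assumes "finite J" and "\<And>j. j \<in> J \<Longrightarrow> M *v x j = l j *\<^sub>R x j"
  shows "exp_itM t M (\<Sum>j\<in>J. c j *s of_real_vec (x j))
       = (\<Sum>j\<in>J. (c j * exp (\<i> * complex_of_real (t * l j))) *s of_real_vec (x j))"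
proof -
  have series: "(\<lambda>k. \<Sum>j\<in>J. (c j * ((\<i> * complex_of_real (t * l j)) ^ k /\<^sub>R fact k)) *s of_real_vec (x j))
      sums (\<Sum>j\<in>J. (c j * exp (\<i> * complex_of_real (t * l j))) *s of_real_vec (x j))"
  proof (intro sums_sum)
    fix j
    have "(\<lambda>k. c j * ((\<i> * complex_of_real (t * l j)) ^ k /\<^sub>R fact k) * complex_of_real (x j $ i))
        sums (c j * exp (\<i> * complex_of_real (t * l j)) * complex_of_real (x j $ i))" for i
      by (intro sums_mult sums_mult2 exp_converges)
    then show "(\<lambda>k. (c j * ((\<i> * complex_of_real (t * l j)) ^ k /\<^sub>R fact k)) *s of_real_vec (x j))
        sums ((c j * exp (\<i> * complex_of_real (t * l j))) *s of_real_vec (x j))"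
      unfolding sums_def by (intro vec_tendstoI) (simp add: sum_component)
  qed
  have "exp_itM t M (\<Sum>j\<in>J. c j *s of_real_vec (x j))
      = (\<Sum>k. \<Sum>j\<in>J. (c j * ((\<i> * complex_of_real (t * l j)) ^ k /\<^sub>R fact k)) *s of_real_vec (x j))"
    unfolding exp_itM_def
  proof (intro arg_cong[where f = suminf] ext)
    fix k
    show "((\<i> * complex_of_real t) ^ k / of_nat (fact k)) *s
             (cmat_vec M ^^ k) (\<Sum>j\<in>J. c j *s of_real_vec (x j))
      = (\<Sum>j\<in>J. (c j * ((\<i> * complex_of_real (t * l j)) ^ k /\<^sub>R fact k)) *s of_real_vec (x j))"
      by (subst cmat_vec_power_eigenvectors[OF assms(2)])
        (simp_all add: vec_eq_iff sum_component sum_distrib_left scaleR_conv_of_real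
          power_mult_distrib mult_ac divide_inverse)
  qed
  also have "\<dots> = (\<Sum>j\<in>J. (c j * exp (\<i> * complex_of_real (t * l j))) *s of_real_vec (x j))"
    using series by (rule sums_unique[symmetric])
  finally show ?thesis .
qed

lemma eigenvector_combination_coefficient_eq_0:
  fixes M :: "real^'n^'n"
  assumes M: "symmetric_matrix M" and "finite S" and eig: "\<And>l. l \<in> S \<Longrightarrow> M *v y l = l *\<^sub>R y l"
    and zero: "(\<Sum>l\<in>S. c l *s of_real_vec (y l)) = 0" and "m \<in> S" "y m \<noteq> 0"
  shows "c m = 0"
proof -
  have "0 = (\<Sum>a\<in>UNIV. (\<Sum>l\<in>S. c l *s of_real_vec (y l)) $ a * complex_of_real (y m $ a))"
    by (simp add: zero)
  also have "\<dots> = (\<Sum>l\<in>S. c l * complex_of_real (y l \<bullet> y m))"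
    by (simp add: sum_component inner_vec_def sum_distrib_left sum_distrib_right mult_ac
        sum.swap[of _ S])
  also have "\<dots> = (\<Sum>l\<in>S. if l = m then c m * complex_of_real (y m \<bullet> y m) else 0)"
    using eigenvectors_orthogonal[OF M eig eig] \<open>m \<in> S\<close> by (intro sum.cong) auto
  also have "\<dots> = c m * complex_of_real (y m \<bullet> y m)"
    using assms(2,5) by simp
  finally show ?thesis using \<open>y m \<noteq> 0\<close> by simp
qed

lemma exp_itM_spectral:
  fixes M :: "real^'n^'n"
  assumes "symmetric_matrix M"
  shows "exp_itM t M (of_real_vec v)
       = (\<Sum>l\<in>spectral_support M v. exp (\<i> * complex_of_real (t * l)) *s of_real_vec (eigenproj M l v))"
proof -
  have "exp_itM t M (of_real_vec v)
      = exp_itM t M (\<Sum>l\<in>spectral_support M v. 1 *s of_real_vec (eigenproj M l v))"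
    by (simp add: sum_eigenproj[OF assms] flip: of_real_vec_sum)
  also have "\<dots> = (\<Sum>l\<in>spectral_support M v.
      (1 * exp (\<i> * complex_of_real (t * l))) *s of_real_vec (eigenproj M l v))"
    by (rule exp_itM_eigenvectors[OF finite_spectral_support[OF assms]]) (rule eigenproj_eigenvector)
  finally show ?thesis by simp
qed

lemma exp_itM_eq_scaled_iff:
  fixes M :: "real^'n^'n"
  assumes M: "symmetric_matrix M"
  shows "exp_itM t M (of_real_vec v) = c *s of_real_vec v
     \<longleftrightarrow> (\<forall>l\<in>spectral_support M v. exp (\<i> * complex_of_real (t * l)) = c)"
proof -
  let ?S = "spectral_support M v"
  have "c *s of_real_vec v = c *s of_real_vec (\<Sum>l\<in>?S. eigenproj M l v)"
    by (simp only: sum_eigenproj[OF M])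
  then have "exp_itM t M (of_real_vec v) - c *s of_real_vec v
      = (\<Sum>l\<in>?S. (exp (\<i> * complex_of_real (t * l)) - c) *s of_real_vec (eigenproj M l v))"
    unfolding exp_itM_spectral[OF M]
    by (simp add: vec_eq_iff sum_component sum_distrib_left sum_subtractf algebra_simps)
  moreover have "exp (\<i> * complex_of_real (t * l)) - c = 0"
    if "(\<Sum>l\<in>?S. (exp (\<i> * complex_of_real (t * l)) - c) *s of_real_vec (eigenproj M l v)) = 0"
      and "l \<in> ?S" for l
    using eigenvector_combination_coefficient_eq_0[OF M finite_spectral_support[OF M, of v]
        eigenproj_eigenvector that] that(2)
    by (simp add: spectral_support_def)
  ultimately show ?thesis by (auto simp: right_minus_eq)
qed

section \<open>Graph Laplacians\<close>

lemma real_degree_eq_sum: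
  fixes E :: "'v::finite \<Rightarrow> 'v \<Rightarrow> bool"
  shows "real (degree E i) = (\<Sum>j\<in>UNIV. if E i j then 1 else 0)"
proof -
  have "(\<Sum>j\<in>UNIV. if E i j then 1 else (0::real)) = (\<Sum>j\<in>{j. E i j}. 1)"
    by (simp add: sum.If_cases Collect_conv_if)
  then show ?thesis by (simp add: degree_def)
qed

lemma laplacian_mult_nth:
  fixes E :: "'v::finite \<Rightarrow> 'v \<Rightarrow> bool"
  shows "(laplacian E *v x) $ i = real (degree E i) * x $ i - (\<Sum>j\<in>UNIV. if E i j then x $ j else 0)"
proof -
  have "(laplacian E *v x) $ i
      = (\<Sum>j\<in>UNIV. (if i = j then real (degree E i) * x $ j else 0) - (if E i j then x $ j else 0))"
    unfolding matrix_vector_mult_def vec_lambda_beta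
    by (intro sum.cong refl) (simp add: laplacian_def left_diff_distrib)
  then show ?thesis by (simp add: sum_subtractf)
qed

lemma symmetric_laplacian: "simple_graph E \<Longrightarrow> symmetric_matrix (laplacian E)"
  by (auto simp: symmetric_matrix_def simple_graph_def laplacian_def transpose_def vec_eq_iff)

lemma laplacian_one: "laplacian E *v 1 = 0"
  by (simp add: vec_eq_iff laplacian_mult_nth real_degree_eq_sum if_distrib cong: if_cong)

lemma laplacian_quadratic_form:
  fixes E :: "'v::finite \<Rightarrow> 'v \<Rightarrow> bool"
  assumes "simple_graph E"
  shows "2 * (x \<bullet> (laplacian E *v x)) = (\<Sum>a\<in>UNIV. \<Sum>b\<in>UNIV. if E a b then (x $ a - x $ b)\<^sup>2 else 0)"
proof -
  have sym: "E a b = E b a" for a b using assms unfolding simple_graph_def by blast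
  define A where "A = (\<Sum>a\<in>UNIV. \<Sum>b\<in>UNIV. if E a b then x $ a * x $ a - x $ a * x $ b else 0)"
  have "x \<bullet> (laplacian E *v x) = A"
    unfolding A_def inner_vec_def laplacian_mult_nth real_degree_eq_sum
    by (intro sum.cong refl) (simp add: sum_distrib_left sum_distrib_right right_diff_distrib
        sum_subtractf[symmetric] if_distrib cong: if_cong)
  moreover have "(\<Sum>a\<in>UNIV. \<Sum>b\<in>UNIV. if E a b then x $ b * x $ b - x $ b * x $ a else 0) = A"
    unfolding A_def using sym by (subst sum.swap) simp
  moreover have "(\<Sum>a\<in>UNIV. \<Sum>b\<in>UNIV. if E a b then (x $ a - x $ b)\<^sup>2 else 0)
      = (\<Sum>a\<in>UNIV. \<Sum>b\<in>UNIV. (if E a b then x $ a * x $ a - x $ a * x $ b else 0)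
          + (if E a b then x $ b * x $ b - x $ b * x $ a else 0))"
    by (intro sum.cong refl) (simp add: power2_eq_square algebra_simps)
  ultimately show ?thesis by (simp add: sum.distrib A_def)
qed

lemma laplacian_eigenvalue_nonneg:
  assumes "simple_graph E" "laplacian E *v x = l *\<^sub>R x" "x \<noteq> 0"
  shows "l \<ge> 0"
proof -
  have "0 \<le> 2 * (x \<bullet> (laplacian E *v x))"
    unfolding laplacian_quadratic_form[OF assms(1)] by (intro sum_nonneg) auto
  moreover have "x \<bullet> x > 0" using assms(3) by simp
  ultimately show ?thesis using assms(2) by (simp add: zero_le_mult_iff)
qed

lemma laplacian_kernel_constant_on_edges:
  fixes E :: "'v::finite \<Rightarrow> 'v \<Rightarrow> bool"
  assumes "simple_graph E" "laplacian E *v x = 0" "E a b"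
  shows "x $ a = x $ b"
proof -
  have "(\<Sum>a\<in>UNIV. \<Sum>b\<in>UNIV. if E a b then (x $ a - x $ b)\<^sup>2 else 0) = 0"
    unfolding laplacian_quadratic_form[OF assms(1), symmetric] assms(2) by simp
  then have "(if E a b then (x $ a - x $ b)\<^sup>2 else 0) = 0"
    by (subst (asm) sum_nonneg_eq_0_iff; force intro: sum_nonneg simp: sum_nonneg_eq_0_iff)
  with assms(3) show ?thesis by simp
qed

lemma laplacian_kernel_constant_on_paths:
  assumes "simple_graph E" "laplacian E *v x = 0" "E\<^sup>*\<^sup>* a b"
  shows "x $ a = x $ b"
  using assms(3) by induction (auto dest: laplacian_kernel_constant_on_edges[OF assms(1,2)])

lemma laplacian_component_indicator:
  assumes "simple_graph E"
  shows "laplacian E *v (\<chi> b. if E\<^sup>*\<^sup>* u b then 1 else 0) = 0"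
proof -
  have sym: "E a b \<Longrightarrow> E b a" for a b using assms unfolding simple_graph_def by blast
  have "(\<Sum>b\<in>UNIV. if E a b then (if E\<^sup>*\<^sup>* u b then 1 else 0) else 0)
      = (if E\<^sup>*\<^sup>* u a then real (degree E a) else 0)" for a
  proof (cases "E\<^sup>*\<^sup>* u a")
    case True
    then have "E a b \<Longrightarrow> E\<^sup>*\<^sup>* u b" for b by (meson rtranclp.rtrancl_into_rtrancl)
    with True show ?thesis by (simp add: real_degree_eq_sum cong: if_cong)
  next
    case False
    then have "E a b \<Longrightarrow> \<not> E\<^sup>*\<^sup>* u b" for b by (meson rtranclp.rtrancl_into_rtrancl sym)
    with False show ?thesis by (simp cong: if_cong)
  qed
  then show ?thesis
    unfolding vec_eq_iff laplacian_mult_nth vec_lambda_beta by simp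
qed

lemma eigenproj_laplacian_inner_one:
  fixes E :: "'v::finite \<Rightarrow> 'v \<Rightarrow> bool"
  assumes "simple_graph E"
  shows "eigenproj (laplacian E) l v \<bullet> 1 = (if l = 0 then v \<bullet> 1 else 0)"
proof (cases "l = 0")
  case True
  have "1 \<in> eigenspace (laplacian E) 0" by (simp add: eigenspace_def laplacian_one)
  with orth_proj_orthogonal[OF subspace_eigenspace this, of v] True show ?thesis
    by (simp add: inner_diff_left)
next
  case False
  then show ?thesis
    using eigenvectors_orthogonal[OF symmetric_laplacian[OF assms] eigenproj_eigenvector, of 1 0]
    by (simp add: laplacian_one)
qed

lemma zero_in_eig_support: "simple_graph E \<Longrightarrow> 0 \<in> eig_support E u"
  using eigenproj_laplacian_inner_one[of E 0 "axis u 1"]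
  by (auto simp: eig_support_eq_spectral_support spectral_support_def inner_axis')

lemma eig_support_nonneg: "simple_graph E \<Longrightarrow> l \<in> eig_support E u \<Longrightarrow> l \<ge> 0"
  by (auto simp: eig_support_eq_spectral_support spectral_support_def
      intro: laplacian_eigenvalue_nonneg eigenproj_eigenvector)

lemma eigenproj_zero_axis_eq_iff_connected:
  fixes E :: "'v::finite \<Rightarrow> 'v \<Rightarrow> bool"
  assumes "simple_graph E"
  shows "eigenproj (laplacian E) 0 (axis u 1) = (1 / real CARD('v)) *\<^sub>R 1 \<longleftrightarrow> connected_graph E"
proof
  let ?P = "eigenproj (laplacian E) 0 (axis u 1)"
  assume P: "?P = (1 / real CARD('v)) *\<^sub>R 1"
  define C where "C = {b. E\<^sup>*\<^sup>* u b}"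
  define c :: "real^'v" where "c = (\<chi> b. if b \<in> C then 1 else 0)"
  have "c \<in> eigenspace (laplacian E) 0"
    using laplacian_component_indicator[OF assms] by (simp add: eigenspace_def c_def C_def)
  then have "axis u 1 \<bullet> c = ?P \<bullet> c"
    using orth_proj_orthogonal[OF subspace_eigenspace] by (simp add: inner_diff_left)
  moreover have "axis u 1 \<bullet> c = 1" by (simp add: inner_axis' c_def C_def)
  moreover have "?P \<bullet> c = real (card C) / real CARD('v)"
    by (simp add: P c_def inner_vec_def sum.If_cases flip: sum_divide_distrib)
  ultimately have "real (card C) = real CARD('v)" by simp
  then have "C = UNIV" by (simp add: card_subset_eq)
  then have "E\<^sup>*\<^sup>* u b" for b by (auto simp: C_def)
  moreover have "symp E\<^sup>*\<^sup>*"
    using assms by (intro symp_rtranclp) (auto simp: simple_graph_def symp_def)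
  ultimately show "connected_graph E"
    unfolding connected_graph_def by (meson rtranclp_trans sympD)
next
  let ?P = "eigenproj (laplacian E) 0 (axis u 1)"
  assume "connected_graph E"
  define c where "c = ?P $ u"
  have const: "?P $ a = c" for a
    using laplacian_kernel_constant_on_paths[OF assms, of ?P] eigenproj_eigenvector[of "laplacian E" 0]
      \<open>connected_graph E\<close> by (simp add: connected_graph_def c_def)
  have "?P \<bullet> 1 = 1"
    using eigenproj_laplacian_inner_one[OF assms, of 0 "axis u 1"] by (simp add: inner_axis')
  then have "real CARD('v) * c = 1"
    by (simp add: inner_vec_def const)
  then show "?P = (1 / real CARD('v)) *\<^sub>R 1"
    by (simp add: vec_eq_iff const field_simps)
qed

section \<open>Perfect state transfer in the blow-up\<close>

definition even_lift :: "'a^'v \<Rightarrow> 'a^(bool \<times> 'v)" where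
  "even_lift x = (\<chi> p. x $ snd p)"

definition odd_lift :: "'a::ring_1^'v \<Rightarrow> 'a^(bool \<times> 'v)" where
  "odd_lift x = (\<chi> p. (if fst p then -1 else 1) * x $ snd p)"

lemma even_lift_nth [simp]: "even_lift x $ p = x $ snd p"
  by (simp add: even_lift_def)

lemma odd_lift_nth [simp]: "odd_lift x $ p = (if fst p then -1 else 1) * x $ snd p"
  by (simp add: odd_lift_def)

lemma sum_UNIV_bool_times:
  fixes f :: "bool \<times> 'v::finite \<Rightarrow> 'a::comm_monoid_add"
  shows "(\<Sum>p\<in>UNIV. f p) = (\<Sum>b\<in>UNIV. f (True, b)) + (\<Sum>b\<in>UNIV. f (False, b))"
proof -
  have "(\<Sum>p\<in>UNIV. f p) = (\<Sum>l\<in>UNIV. \<Sum>b\<in>UNIV. f (l, b))"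
    by (simp add: sum.cartesian_product split_def flip: UNIV_Times_UNIV)
  then show ?thesis by (simp add: UNIV_bool add.commute)
qed

lemma degree_blowup2: "degree (blowup2 X) p = 2 * degree X (snd p)"
proof -
  have "{q. blowup2 X p q} = UNIV \<times> {v. X (snd p) v}" by (auto simp: blowup2_def)
  then show ?thesis by (simp add: degree_def card_cartesian_product)
qed

lemma laplacian_blowup2_even_lift:
  fixes X :: "'v::finite \<Rightarrow> 'v \<Rightarrow> bool"
  shows "laplacian (blowup2 X) *v even_lift x = even_lift (2 *\<^sub>R (laplacian X *v x))"
  unfolding vec_eq_iff laplacian_mult_nth degree_blowup2 sum_UNIV_bool_times
  by (simp add: blowup2_def laplacian_mult_nth algebra_simps cong: if_cong)

lemma laplacian_blowup2_odd_lift_axis: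
  fixes X :: "'v::finite \<Rightarrow> 'v \<Rightarrow> bool"
  shows "laplacian (blowup2 X) *v odd_lift (axis u 1) = (2 * real (degree X u)) *\<^sub>R odd_lift (axis u 1)"
proof -
  have neg: "(if P then - a else 0) = - (if P then a else (0::real))" for P a by simp
  show ?thesis
    unfolding vec_eq_iff laplacian_mult_nth degree_blowup2 sum_UNIV_bool_times
    by (simp add: blowup2_def axis_def neg sum_negf cong: if_cong)
qed

(* e_(0,u) is half the sum of odd_lift e_u, an eigenvector for 2 d_u, and of even_lift e_u, whose
   pieces even_lift (P_\<lambda> e_u) are eigenvectors for 2\<lambda>; so the even part evolves as e_u does in X
   at twice the time. *)

lemma exp_itM_blowup2_axis:
  fixes X :: "'v::finite \<Rightarrow> 'v \<Rightarrow> bool"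
  assumes X: "simple_graph X"
  shows "exp_itM t (laplacian (blowup2 X)) (axis (False, u) 1)
     = (exp (\<i> * complex_of_real (2 * t * real (degree X u))) / 2) *s of_real_vec (odd_lift (axis u 1))
       + (1 / 2) *s even_lift (exp_itM (2 * t) (laplacian X) (axis u 1))"
proof -
  let ?L = "laplacian X"
  let ?S = "spectral_support ?L (axis u 1)"
  have fin: "finite ?S" and dec: "(\<Sum>l\<in>?S. eigenproj ?L l (axis u 1)) = axis u 1"
    using finite_spectral_support sum_eigenproj symmetric_laplacian[OF X] by blast+
  define J where "J = insert None (Some ` ?S)"
  define x where "x j = (case j of None \<Rightarrow> odd_lift (axis u 1)
                                  | Some l \<Rightarrow> even_lift (eigenproj ?L l (axis u 1)))" for j
  define lam where "lam j = (case j of None \<Rightarrow> 2 * real (degree X u) | Some l \<Rightarrow> 2 * l)" for j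
  have sum_J: "(\<Sum>j\<in>J. f j) = f None + (\<Sum>l\<in>?S. f (Some l))" for f :: "real option \<Rightarrow> complex^(bool \<times> 'v)"
    using fin by (simp add: J_def image_iff sum.reindex)
  have eig: "laplacian (blowup2 X) *v x j = lam j *\<^sub>R x j" if "j \<in> J" for j
    using that laplacian_blowup2_odd_lift_axis[of X u]
    by (auto simp: J_def x_def lam_def laplacian_blowup2_even_lift eigenproj_eigenvector vec_eq_iff)
  have dec_nth: "(\<Sum>l\<in>?S. complex_of_real (eigenproj ?L l (axis u 1) $ a)) = (if a = u then 1 else 0)"
    for a using arg_cong[OF dec, of "\<lambda>v. complex_of_real (v $ a)"] by (simp add: sum_component axis_nth_eq)
  have "(axis (False, u) 1 :: complex^(bool \<times> 'v)) = (\<Sum>j\<in>J. (1 / 2) *s of_real_vec (x j))"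
    by (auto simp: vec_eq_iff sum_J x_def sum_component axis_nth_eq dec_nth
        simp flip: sum_divide_distrib)
  also have "exp_itM t (laplacian (blowup2 X)) \<dots>
      = (\<Sum>j\<in>J. (1 / 2 * exp (\<i> * complex_of_real (t * lam j))) *s of_real_vec (x j))"
    by (rule exp_itM_eigenvectors[of J, OF _ eig]) (simp add: J_def fin)
  also have "\<dots> = (exp (\<i> * complex_of_real (2 * t * real (degree X u))) / 2) *s of_real_vec (odd_lift (axis u 1))
       + (1 / 2) *s even_lift (exp_itM (2 * t) (laplacian X) (axis u 1))"
    unfolding sum_J exp_itM_spectral[OF symmetric_laplacian[OF X], of _ "axis u 1", unfolded of_real_vec_axis]
    by (simp add: vec_eq_iff x_def lam_def sum_component sum_distrib_left mult_ac)
  finally show ?thesis .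
qed

lemma lap_pst_blowup2_iff:
  fixes X :: "'v::finite \<Rightarrow> 'v \<Rightarrow> bool"
  assumes X: "simple_graph X"
  shows "lap_pst (blowup2 X) (False, u) (True, u) t \<longleftrightarrow> t > 0 \<and>
     (\<forall>l\<in>eig_support X u. exp (\<i> * complex_of_real (2 * t * l))
        = - exp (\<i> * complex_of_real (2 * t * real (degree X u))))"
proof -
  define \<omega> where "\<omega> = exp (\<i> * complex_of_real (2 * t * real (degree X u)))"
  define w where "w = exp_itM (2 * t) (laplacian X) (axis u 1)"
  have nth: "exp_itM t (laplacian (blowup2 X)) (axis (False, u) 1) $ (l, a)
      = (if l then - \<omega> / 2 else \<omega> / 2) * axis u 1 $ a + w $ a / 2" for l a
    unfolding exp_itM_blowup2_axis[OF X] \<omega>_def w_def by (simp add: axis_nth_eq)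
  have "(\<exists>\<gamma>. exp_itM t (laplacian (blowup2 X)) (axis (False, u) 1) = \<gamma> *s axis (True, u) 1)
      \<longleftrightarrow> w = (- \<omega>) *s axis u 1"
  proof
    assume "\<exists>\<gamma>. exp_itM t (laplacian (blowup2 X)) (axis (False, u) 1) = \<gamma> *s axis (True, u) 1"
    then obtain \<gamma> where \<gamma>: "exp_itM t (laplacian (blowup2 X)) (axis (False, u) 1) = \<gamma> *s axis (True, u) 1"
      by blast
    have "w $ a = - \<omega> * axis u 1 $ a" for a
      using arg_cong[OF \<gamma>, of "\<lambda>v. v $ (False, a)"] unfolding nth
      by (cases "a = u") (auto simp: axis_nth_eq field_simps eq_neg_iff_add_eq_0)
    then show "w = (- \<omega>) *s axis u 1" by (simp add: vec_eq_iff)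
  next
    assume "w = (- \<omega>) *s axis u 1"
    then have "exp_itM t (laplacian (blowup2 X)) (axis (False, u) 1) = (- \<omega>) *s axis (True, u) 1"
      by (simp add: vec_eq_iff split_paired_all nth axis_nth_eq)
    then show "\<exists>\<gamma>. exp_itM t (laplacian (blowup2 X)) (axis (False, u) 1) = \<gamma> *s axis (True, u) 1" ..
  qed
  also have "w = (- \<omega>) *s axis u 1 \<longleftrightarrow> (\<forall>l\<in>eig_support X u. exp (\<i> * complex_of_real (2 * t * l)) = - \<omega>)"
    using exp_itM_eq_scaled_iff[OF symmetric_laplacian[OF X], of "2 * t" "axis u 1" "- \<omega>"]
    by (simp add: w_def of_real_vec_axis eig_support_eq_spectral_support)
  finally show ?thesis by (simp add: lap_pst_def \<omega>_def)
qed

(* The conditions exp(2itd) = -1 and exp(2itx) = 1 for x \<in> N, in arithmetic form. *)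

definition pst_time :: "real \<Rightarrow> real set \<Rightarrow> real \<Rightarrow> bool" where
  "pst_time d N t \<longleftrightarrow> t > 0 \<and> (\<exists>k::int. 2 * t * d = of_int (2 * k + 1) * pi)
     \<and> (\<forall>x\<in>N. \<exists>j::int. t * x = of_int j * pi)"

lemma exp_i_eq_1_iff: "exp (\<i> * complex_of_real x) = 1 \<longleftrightarrow> (\<exists>j::int. x = of_int (2 * j) * pi)"
  by (simp add: exp_eq_1)

lemma exp_i_eq_minus_1_iff:
  "exp (\<i> * complex_of_real x) = -1 \<longleftrightarrow> (\<exists>k::int. x = of_int (2 * k + 1) * pi)"
proof -
  have "exp (\<i> * complex_of_real x) = -1 \<longleftrightarrow> exp (\<i> * complex_of_real (x - pi)) = 1"
    by (simp add: right_diff_distrib exp_diff minus_equation_iff[of "exp _"] eq_commute[of "-1"])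
  also have "\<dots> \<longleftrightarrow> (\<exists>k::int. x = of_int (2 * k + 1) * pi)"
    unfolding exp_i_eq_1_iff by (simp add: algebra_simps)
  finally show ?thesis .
qed

lemma lap_pst_blowup2_iff_pst_time:
  fixes X :: "'v::finite \<Rightarrow> 'v \<Rightarrow> bool"
  assumes X: "simple_graph X"
  shows "lap_pst (blowup2 X) (False, u) (True, u) t \<longleftrightarrow> pst_time (real (degree X u)) (eig_support X u - {0}) t"
proof -
  let ?e = "\<lambda>l. exp (\<i> * complex_of_real (2 * t * l))"
  have e0: "?e 0 = 1" by simp
  have "(\<forall>l\<in>eig_support X u. ?e l = - ?e (real (degree X u)))
      \<longleftrightarrow> ?e (real (degree X u)) = -1 \<and> (\<forall>l\<in>eig_support X u - {0}. ?e l = 1)"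
  proof
    assume all: "\<forall>l\<in>eig_support X u. ?e l = - ?e (real (degree X u))"
    then have "?e (real (degree X u)) = -1"
      using zero_in_eig_support[OF X, of u] e0 by (metis minus_minus)
    with all show "?e (real (degree X u)) = -1 \<and> (\<forall>l\<in>eig_support X u - {0}. ?e l = 1)"
      by auto
  next
    assume "?e (real (degree X u)) = -1 \<and> (\<forall>l\<in>eig_support X u - {0}. ?e l = 1)"
    with e0 show "\<forall>l\<in>eig_support X u. ?e l = - ?e (real (degree X u))"
      by (metis DiffI minus_minus singletonD)
  qed
  also have "\<dots> \<longleftrightarrow> (\<exists>k::int. 2 * t * real (degree X u) = of_int (2 * k + 1) * pi)
      \<and> (\<forall>l\<in>eig_support X u - {0}. \<exists>j::int. t * l = of_int j * pi)"
    unfolding exp_i_eq_1_iff exp_i_eq_minus_1_iff by (simp add: mult.assoc)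
  finally show ?thesis
    unfolding lap_pst_blowup2_iff[OF X] pst_time_def by blast
qed

section \<open>Integrality and 2-adic valuations\<close>

lemma det_cong:
  fixes A B :: "int^'n^'n"
  assumes "\<And>i j. [A $ i $ j = B $ i $ j] (mod q)"
  shows "[det A = det B] (mod q)"
  unfolding det_def using assms by (intro cong_sum cong_mult cong_refl cong_prod)

lemma det_map_of_int:
  fixes A :: "int^'n^'n"
  shows "det (\<chi> i j. (of_int (A $ i $ j) :: 'a::comm_ring_1)) = of_int (det A)"
  unfolding det_def by (simp add: of_int_sum of_int_prod)

lemma det_eq_0_if_kernel:
  fixes A :: "real^'n^'n"
  assumes "A *v x = 0" "x \<noteq> 0"
  shows "det A = 0"
  using assms invertible_det_nz invertible_left_inverse matrix_left_invertible_ker by blast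

(* For l = p/q in lowest terms, det (p I - q M) = 0, while det (p I - q M) = p^n modulo q. *)

lemma rational_eigenvalue_of_integer_matrix:
  fixes M :: "real^'n^'n"
  assumes M: "\<And>i j. M $ i $ j \<in> \<int>" and eig: "M *v x = l *\<^sub>R x" "x \<noteq> 0" and "l \<in> \<rat>"
  shows "l \<in> \<int>"
proof -
  obtain p q :: int where "q > 0" "coprime p q" and l: "l = of_int p / of_int q"
    using Rats_cases'[OF \<open>l \<in> \<rat>\<close>] by blast
  define B :: "int^'n^'n" where "B = (\<chi> i j. (if i = j then p else 0) - q * \<lfloor>M $ i $ j\<rfloor>)"
  have floor: "real_of_int \<lfloor>M $ i $ j\<rfloor> = M $ i $ j" for i j
    using M by (metis Ints_cases floor_of_int)
  have "((\<chi> i j. real_of_int (B $ i $ j)) *v x) $ i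
      = (\<Sum>j\<in>UNIV. (if i = j then of_int p * x $ j else 0) - of_int q * (M $ i $ j * x $ j))" for i
    unfolding matrix_vector_mult_def B_def vec_lambda_beta
    by (intro sum.cong refl) (simp add: floor algebra_simps)
  then have "(\<chi> i j. real_of_int (B $ i $ j)) *v x = of_int p *\<^sub>R x - of_int q *\<^sub>R (M *v x)"
    by (simp add: vec_eq_iff sum_subtractf matrix_vector_mult_def sum_distrib_left)
  also have "\<dots> = 0"
    using eig(1) \<open>q > 0\<close> by (simp add: l)
  finally have "real_of_int (det B) = 0"
    using det_eq_0_if_kernel[OF _ eig(2)] by (simp flip: det_map_of_int)
  then have "det B = 0" by simp
  moreover have "[det B = det (mat p :: int^'n^'n)] (mod q)"
    by (intro det_cong) (simp add: B_def mat_def cong_iff_dvd_diff)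
  moreover have "det (mat p :: int^'n^'n) = p ^ CARD('n)"
    by (subst det_diagonal) (simp_all add: mat_def)
  ultimately have "[0 = p ^ CARD('n)] (mod q)"
    by simp
  then have "[p ^ CARD('n) = 0] (mod q)" by (rule cong_sym)
  then have "q dvd p ^ CARD('n)" by (simp only: cong_0_iff)
  moreover have "coprime (p ^ CARD('n)) q" using \<open>coprime p q\<close> by simp
  ultimately have "is_unit q" by (metis coprime_common_divisor dvd_refl)
  with \<open>q > 0\<close> have "q = 1" by simp
  with l show ?thesis by simp
qed

lemma nu2_mult: "x \<noteq> 0 \<Longrightarrow> y \<noteq> 0 \<Longrightarrow> nu2 (x * y) = nu2 x + nu2 y"
  unfolding nu2_def by (rule prime_elem_multiplicity_mult_distrib) (simp_all add: prime_elem_iff_prime_abs)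

lemma nu2_2: "nu2 2 = 1"
  by (simp add: nu2_def prime_elem_iff_prime_abs)

lemma nu2_odd: "odd k \<Longrightarrow> nu2 k = 0"
  by (simp add: nu2_def not_dvd_imp_multiplicity_0)

lemma pi_multiples_ratio:
  assumes "2 * t * d = of_int (2 * k + 1) * pi" "t * x = of_int j * pi"
  shows "of_int (2 * k + 1) * x = 2 * d * of_int j"
proof -
  have "of_int (2 * k + 1) * x * pi = (of_int (2 * k + 1) * pi) * x" by (simp only: ac_simps)
  also have "\<dots> = (2 * t * d) * x" by (simp only: assms(1))
  also have "\<dots> = 2 * d * (t * x)" by (simp add: algebra_simps)
  also have "\<dots> = 2 * d * of_int j * pi" by (simp add: assms(2))
  finally show ?thesis by simp
qed

lemma nu2_less_if_pst_time:
  fixes d x :: int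
  assumes "pst_time (of_int d) (of_int ` N) t" "d \<noteq> 0" "x \<in> N" "x \<noteq> 0"
  shows "nu2 d < nu2 x"
proof -
  obtain k j :: int where "2 * t * of_int d = of_int (2 * k + 1) * pi" "t * of_int x = of_int j * pi"
    using assms(1,3) unfolding pst_time_def by blast
  then have "real_of_int ((2 * k + 1) * x) = real_of_int (2 * (d * j))"
    using pi_multiples_ratio by simp
  then have eq: "(2 * k + 1) * x = 2 * (d * j)"
    by (simp only: of_int_eq_iff)
  have odd: "odd (2 * k + 1)" by simp
  then have "2 * k + 1 \<noteq> 0" by (metis even_zero)
  with eq assms(4) have "j \<noteq> 0" by auto
  have "nu2 x = nu2 ((2 * k + 1) * x)"
    using \<open>2 * k + 1 \<noteq> 0\<close> assms(4) odd by (simp add: nu2_mult nu2_odd)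
  also have "\<dots> = 1 + nu2 d + nu2 j"
    using eq \<open>j \<noteq> 0\<close> assms(2) by (simp add: nu2_mult nu2_2)
  finally show ?thesis by simp
qed

(* With g = gcd ({d} \<union> N), the valuation hypothesis makes d/g odd and every x/g with x \<in> N
   even. *)

lemma pst_time_at_Gcd:
  fixes d :: int
  assumes "finite N" "d > 0" "0 \<notin> N" "\<And>x. x \<in> N \<Longrightarrow> nu2 d < nu2 x"
  shows "pst_time (of_int d) (of_int ` N) (pi / (2 * of_int (Gcd (insert d N))))"
proof -
  define g where "g = Gcd (insert d N)"
  have "g \<noteq> 0" using assms(2) by (auto simp: g_def Gcd_0_iff)
  then have "g > 0" by (simp add: g_def order_le_neq_trans)
  have "g dvd d" by (simp add: g_def)
  then obtain a where a: "d = g * a" by (rule dvdE)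
  have even_quotient: "2 * g dvd x" if "x \<in> N" for x
  proof -
    have "g dvd x" unfolding g_def by (rule Gcd_dvd) (simp add: that)
    then obtain b where b: "x = g * b" by (rule dvdE)
    then have "b \<noteq> 0" using assms(3) that by auto
    moreover have "a \<noteq> 0" using a assms(2) by auto
    ultimately have "nu2 d = nu2 g + nu2 a" "nu2 x = nu2 g + nu2 b"
      using a b \<open>g \<noteq> 0\<close> by (simp_all add: nu2_mult)
    then have "nu2 b \<noteq> 0" using assms(4)[OF that] by linarith
    then have "even b" using nu2_odd[of b] by auto
    with b show ?thesis by simp
  qed
  have "odd a"
  proof
    assume "even a"
    then have "2 * g dvd x" if "x \<in> insert d N" for x
      using that a even_quotient by auto
    then have "2 * g dvd g" unfolding g_def by (intro Gcd_greatest) (simp add: g_def)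
    with \<open>g > 0\<close> show False by (simp add: zdvd_not_zless)
  qed
  then obtain k where k: "a = 2 * k + 1" by (rule oddE)
  show ?thesis
    unfolding pst_time_def g_def[symmetric]
  proof (intro conjI ballI)
    show "\<exists>k::int. 2 * (pi / (2 * of_int g)) * of_int d = of_int (2 * k + 1) * pi"
      using \<open>g > 0\<close> by (intro exI[of _ k]) (simp add: a k field_simps)
    fix y :: real assume "y \<in> of_int ` N"
    then obtain x where "x \<in> N" "y = of_int x" by blast
    with even_quotient obtain j where "x = 2 * g * j" by blast
    with \<open>y = of_int x\<close> \<open>g > 0\<close> show "\<exists>j::int. pi / (2 * of_int g) * y = of_int j * pi"
      by (intro exI[of _ j]) (simp add: field_simps)
  qed (use \<open>g > 0\<close> in simp)
qed

lemma Gcd_le_pst_time: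
  fixes d :: int
  assumes "pst_time (of_int d) (of_int ` N) t" "d > 0"
  shows "pi / (2 * of_int (Gcd (insert d N))) \<le> t"
proof -
  obtain k :: int where k: "2 * t * of_int d = of_int (2 * k + 1) * pi" and "t > 0"
    using assms(1) unfolding pst_time_def by blast
  define c where "c = 2 * k + 1"
  have "0 < 2 * t * of_int d" using \<open>t > 0\<close> assms(2) by simp
  then have "0 < of_int c * pi" using k by (simp add: c_def)
  then have "c > 0" by (simp add: zero_less_mult_iff)
  have "d dvd c * x" if "x \<in> insert d N" for x
  proof (cases "x = d")
    case False
    with that obtain j :: int where "t * of_int x = of_int j * pi"
      using assms(1) unfolding pst_time_def by blast
    from pi_multiples_ratio[OF k this]
    have "real_of_int (c * x) = real_of_int (d * (2 * j))" by (simp add: c_def mult_ac)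
    then have "c * x = d * (2 * j)" by (simp only: of_int_eq_iff)
    then show ?thesis by simp
  qed simp
  then have "d dvd Gcd ((*) c ` insert d N)" by (intro Gcd_greatest) blast
  also have "Gcd ((*) c ` insert d N) = c * Gcd (insert d N)"
    using \<open>c > 0\<close> by (simp only: Gcd_mult) (simp add: normalize_mult)
  finally have "d dvd c * Gcd (insert d N)" .
  moreover have "Gcd (insert d N) > 0"
    using assms(2) by (simp add: Gcd_0_iff order_le_neq_trans)
  ultimately have "real_of_int d \<le> of_int c * of_int (Gcd (insert d N))"
    using \<open>c > 0\<close> by (simp only: of_int_le_iff flip: of_int_mult) (simp add: zdvd_imp_le)
  have "pi * of_int d \<le> pi * (of_int c * of_int (Gcd (insert d N)))"
    using \<open>real_of_int d \<le> _\<close> by (simp add: mult_left_mono)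
  also have "\<dots> = (2 * t * of_int (Gcd (insert d N))) * of_int d"
    using k by (simp add: c_def ac_simps)
  finally have "pi \<le> 2 * t * of_int (Gcd (insert d N))"
    using assms(2) by simp
  then show ?thesis
    using \<open>Gcd (insert d N) > 0\<close> by (simp add: divide_le_eq ac_simps)
qed

lemma finite_of_int_vimage: "finite (A :: real set) \<Longrightarrow> finite {k::int. of_int k \<in> A}"
  using finite_vimageI[of A "of_int"] by (simp add: inj_on_def vimage_def)

lemma finite_eig_support: "simple_graph X \<Longrightarrow> finite (eig_support X u)"
  by (simp add: eig_support_eq_spectral_support finite_spectral_support symmetric_laplacian)

lemma eig_support_subset_Ints_if_lap_pst:
  fixes X :: "'v::finite \<Rightarrow> 'v \<Rightarrow> bool"
  assumes X: "simple_graph X" and pst: "lap_pst (blowup2 X) (False, u) (True, u) t"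
  shows "eig_support X u \<subseteq> \<int>"
proof
  fix l assume l: "l \<in> eig_support X u"
  show "l \<in> \<int>"
  proof (cases "l = 0")
    case False
    obtain k j :: int where "2 * t * real (degree X u) = of_int (2 * k + 1) * pi" "t * l = of_int j * pi"
      using pst l False unfolding lap_pst_blowup2_iff_pst_time[OF X] pst_time_def by blast
    then have "of_int (2 * k + 1) * l = 2 * real (degree X u) * of_int j"
      by (rule pi_multiples_ratio)
    moreover have "2 * k + 1 \<noteq> 0" by presburger
    ultimately have "l = 2 * real (degree X u) * of_int j / of_int (2 * k + 1)"
      by (simp add: field_simps)
    then have "l \<in> \<rat>" by simp
    moreover obtain x where "x \<noteq> 0" "laplacian X *v x = l *\<^sub>R x"
      using l by (auto simp: eig_support_def)
    moreover have "laplacian X $ i $ j \<in> \<int>" for i j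
      by (simp add: laplacian_def)
    ultimately show ?thesis
      using rational_eigenvalue_of_integer_matrix by blast
  qed simp
qed

lemma lap_pst_blowup2_iff_pst_time_Ints:
  fixes X :: "'v::finite \<Rightarrow> 'v \<Rightarrow> bool"
  assumes X: "simple_graph X" and "eig_support X u \<subseteq> \<int>"
  shows "lap_pst (blowup2 X) (False, u) (True, u) t \<longleftrightarrow>
    pst_time (of_int (int (degree X u))) (of_int ` {k. of_int k \<in> eig_support X u - {0}}) t"
proof -
  have eq: "eig_support X u - {0} = of_int ` {k. of_int k \<in> eig_support X u - {0}}"
  proof (intro equalityI subsetI)
    fix x assume "x \<in> eig_support X u - {0}"
    moreover from this obtain k where "x = of_int k" using assms(2) by (auto elim: Ints_cases)
    ultimately show "x \<in> of_int ` {k. of_int k \<in> eig_support X u - {0}}" by auto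
  qed auto
  show ?thesis unfolding lap_pst_blowup2_iff_pst_time[OF X] eq[symmetric] by simp
qed

theorem lap_pst_blowup2_iff_nu2:
  fixes X :: "'v::finite \<Rightarrow> 'v \<Rightarrow> bool"
  assumes X: "simple_graph X" and "degree X u > 0"
  shows "(\<exists>t. lap_pst (blowup2 X) (False, u) (True, u) t) \<longleftrightarrow> eig_support X u \<subseteq> \<int>
     \<and> (\<forall>k\<in>{k. of_int k \<in> eig_support X u - {0}}. nu2 (int (degree X u)) < nu2 k)"
proof -
  let ?N = "{k. of_int k \<in> eig_support X u - {0}}"
  have "finite ?N"
    using finite_eig_support[OF X] by (intro finite_of_int_vimage) simp
  show ?thesis
  proof
    assume "\<exists>t. lap_pst (blowup2 X) (False, u) (True, u) t"
    then obtain t where t: "lap_pst (blowup2 X) (False, u) (True, u) t" ..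
    then have Z: "eig_support X u \<subseteq> \<int>" by (rule eig_support_subset_Ints_if_lap_pst[OF X])
    with t have "pst_time (of_int (int (degree X u))) (of_int ` ?N) t"
      using lap_pst_blowup2_iff_pst_time_Ints[OF X] by blast
    with Z assms(2) show "eig_support X u \<subseteq> \<int>
        \<and> (\<forall>k\<in>?N. nu2 (int (degree X u)) < nu2 k)"
      using nu2_less_if_pst_time by auto
  next
    assume "eig_support X u \<subseteq> \<int> \<and> (\<forall>k\<in>?N. nu2 (int (degree X u)) < nu2 k)"
    with \<open>finite ?N\<close> assms(2) show "\<exists>t. lap_pst (blowup2 X) (False, u) (True, u) t"
      using pst_time_at_Gcd[of ?N "int (degree X u)"] lap_pst_blowup2_iff_pst_time_Ints[OF X] by auto
  qed
qed

lemma lap_pst_blowup2_min_time: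
  fixes X :: "'v::finite \<Rightarrow> 'v \<Rightarrow> bool"
  assumes X: "simple_graph X" and "degree X u > 0" and "lap_pst (blowup2 X) (False, u) (True, u) t"
  shows "lap_pst (blowup2 X) (False, u) (True, u)
           (pi / (2 * of_int (Gcd (insert (int (degree X u)) {k. of_int k \<in> eig_support X u - {0}}))))
    \<and> pi / (2 * of_int (Gcd (insert (int (degree X u)) {k. of_int k \<in> eig_support X u - {0}}))) \<le> t"
proof -
  let ?N = "{k. of_int k \<in> eig_support X u - {0}}"
  have "finite ?N"
    using finite_eig_support[OF X] by (intro finite_of_int_vimage) simp
  moreover have "eig_support X u \<subseteq> \<int>"
    using eig_support_subset_Ints_if_lap_pst[OF X assms(3)] .
  moreover have "\<forall>k\<in>?N. nu2 (int (degree X u)) < nu2 k"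
    using lap_pst_blowup2_iff_nu2[OF X assms(2)] assms(3) by blast
  ultimately show ?thesis
    using lap_pst_blowup2_iff_pst_time_Ints[OF X] pst_time_at_Gcd[of ?N "int (degree X u)"]
      Gcd_le_pst_time[of "int (degree X u)" ?N t] assms(2,3) by auto
qed

section \<open>The eigenvalue support of a vertex of a join\<close>

lemma simple_graph_join:
  assumes "simple_graph G" "simple_graph H"
  shows "simple_graph (graph_join G H)"
  using assms unfolding simple_graph_def
  by (intro conjI allI impI; elim conjE) (auto elim: graph_join.elims)

lemma sum_UNIV_Plus:
  fixes f :: "'a::finite + 'b::finite \<Rightarrow> 'c::comm_monoid_add"
  shows "(\<Sum>i\<in>UNIV. f i) = (\<Sum>a\<in>UNIV. f (Inl a)) + (\<Sum>b\<in>UNIV. f (Inr b))"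
proof -
  have "(\<Sum>i\<in>UNIV. f i) = (\<Sum>i\<in>UNIV <+> UNIV. f i)" by simp
  also have "\<dots> = (\<Sum>a\<in>UNIV. f (Inl a)) + (\<Sum>b\<in>UNIV. f (Inr b))"
    by (subst sum.Plus) (simp_all add: comp_def)
  finally show ?thesis .
qed

lemma degree_join_Inl:
  fixes G :: "'a::finite \<Rightarrow> 'a \<Rightarrow> bool" and H :: "'b::finite \<Rightarrow> 'b \<Rightarrow> bool"
  shows "degree (graph_join G H) (Inl a) = degree G a + CARD('b)"
proof -
  have "{v. graph_join G H (Inl a) v} = {x. G a x} <+> (UNIV :: 'b set)"
    by (auto elim: graph_join.elims)
  then show ?thesis by (simp add: degree_def card_Plus)
qed

lemma degree_join_Inr:
  fixes G :: "'a::finite \<Rightarrow> 'a \<Rightarrow> bool" and H :: "'b::finite \<Rightarrow> 'b \<Rightarrow> bool"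
  shows "degree (graph_join G H) (Inr b) = degree H b + CARD('a)"
proof -
  have "{v. graph_join G H (Inr b) v} = (UNIV :: 'a set) <+> {x. H b x}"
    by (auto elim: graph_join.elims)
  then show ?thesis by (simp add: degree_def card_Plus)
qed

definition extend_Inl :: "'a^'m::finite \<Rightarrow> 'a::zero^('m + 'n::finite)" where
  "extend_Inl y = (\<chi> i. case i of Inl a \<Rightarrow> y $ a | Inr b \<Rightarrow> 0)"

lemma extend_Inl_nth [simp]: "extend_Inl y $ Inl a = y $ a" "extend_Inl y $ Inr b = 0"
  by (simp_all add: extend_Inl_def)

lemma extend_Inl_eq_0_iff [simp]:
  "(extend_Inl y :: 'a::zero^('m::finite + 'n::finite)) = 0 \<longleftrightarrow> y = 0"
  by (auto simp: vec_eq_iff extend_Inl_def split: sum.split)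

lemma laplacian_join_nth_Inl:
  fixes G :: "'a::finite \<Rightarrow> 'a \<Rightarrow> bool" and H :: "'b::finite \<Rightarrow> 'b \<Rightarrow> bool"
  shows "(laplacian (graph_join G H) *v x) $ Inl a
     = (laplacian G *v (\<chi> a. x $ Inl a)) $ a + real CARD('b) * x $ Inl a - (\<Sum>b\<in>UNIV. x $ Inr b)"
  unfolding laplacian_mult_nth sum_UNIV_Plus degree_join_Inl by (simp add: algebra_simps cong: if_cong)

lemma laplacian_join_nth_Inr:
  fixes G :: "'a::finite \<Rightarrow> 'a \<Rightarrow> bool" and H :: "'b::finite \<Rightarrow> 'b \<Rightarrow> bool"
  shows "(laplacian (graph_join G H) *v x) $ Inr b
     = (laplacian H *v (\<chi> b. x $ Inr b)) $ b + real CARD('a) * x $ Inr b - (\<Sum>a\<in>UNIV. x $ Inl a)"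
  unfolding laplacian_mult_nth sum_UNIV_Plus degree_join_Inr by (simp add: algebra_simps cong: if_cong)

lemma laplacian_const:
  fixes E :: "'v::finite \<Rightarrow> 'v \<Rightarrow> bool"
  shows "laplacian E *v (\<chi> i. c) = 0"
proof -
  have "(\<chi> i. c) = c *\<^sub>R (1 :: real^'v)" by (simp add: vec_eq_iff)
  then show ?thesis by (simp add: matrix_vector_mult_scaleR laplacian_one)
qed

lemma laplacian_join_extend_Inl:
  fixes G :: "'a::finite \<Rightarrow> 'a \<Rightarrow> bool" and H :: "'b::finite \<Rightarrow> 'b \<Rightarrow> bool"
  assumes "laplacian G *v y = l *\<^sub>R y" "y \<bullet> 1 = 0"
  shows "laplacian (graph_join G H) *v (extend_Inl y :: real^('a + 'b))
       = (l + real CARD('b)) *\<^sub>R extend_Inl y"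
proof (subst vec_eq_iff, intro allI)
  fix i :: "'a + 'b"
  show "(laplacian (graph_join G H) *v extend_Inl y) $ i = ((l + real CARD('b)) *\<^sub>R extend_Inl y) $ i"
    using assms by (cases i) (simp_all add: laplacian_join_nth_Inl laplacian_join_nth_Inr
        laplacian_const inner_vec_def algebra_simps)
qed

lemma laplacian_join_bipartition:
  fixes G :: "'a::finite \<Rightarrow> 'a \<Rightarrow> bool" and H :: "'b::finite \<Rightarrow> 'b \<Rightarrow> bool"
  defines "w \<equiv> (\<chi> i. case i of Inl a \<Rightarrow> real CARD('b) | Inr b \<Rightarrow> - real CARD('a)) :: real^('a + 'b)"
  shows "laplacian (graph_join G H) *v w = (real CARD('a) + real CARD('b)) *\<^sub>R w"
proof (subst vec_eq_iff, intro allI)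
  fix i :: "'a + 'b"
  show "(laplacian (graph_join G H) *v w) $ i = ((real CARD('a) + real CARD('b)) *\<^sub>R w) $ i"
    by (cases i) (simp_all add: laplacian_join_nth_Inl laplacian_join_nth_Inr laplacian_const
        w_def algebra_simps)
qed

(* The constant part (1/m) 1 of e_u on V(G) is split along the eigenvectors 1 and w of the join. *)

lemma axis_Inl_join_decomposition:
  fixes G :: "'a::finite \<Rightarrow> 'a \<Rightarrow> bool" and u :: 'a
  assumes G: "simple_graph G"
  defines "m \<equiv> real CARD('a)" and "n \<equiv> real CARD('b)"
    and "Y \<equiv> \<lambda>l. eigenproj (laplacian G) l (axis u 1)"
    and "w \<equiv> (\<chi> i. case i of Inl a \<Rightarrow> real CARD('b) | Inr b \<Rightarrow> - real CARD('a)) :: real^('a + 'b::finite)"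
  shows "(axis (Inl u) 1 :: real^('a + 'b))
    = (\<Sum>l\<in>eig_support G u - {0}. extend_Inl (Y l)) + extend_Inl (Y 0 - (1 / m) *\<^sub>R 1)
      + (1 / (m + n)) *\<^sub>R 1 + (1 / (m * (m + n))) *\<^sub>R w"
proof -
  have "m > 0" "n > 0" by (simp_all add: m_def n_def)
  have "(\<Sum>l\<in>eig_support G u. Y l) = axis u 1"
    unfolding Y_def eig_support_eq_spectral_support by (rule sum_eigenproj[OF symmetric_laplacian[OF G]])
  then have dec: "Y 0 + (\<Sum>l\<in>eig_support G u - {0}. Y l) = axis u 1"
    using sum.remove[OF finite_eig_support[OF G, of u] zero_in_eig_support[OF G, of u], of Y] by simp
  have "Y 0 $ a + (\<Sum>l\<in>eig_support G u - {0}. Y l $ a) = axis u 1 $ a" for a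
    using arg_cong[OF dec, of "\<lambda>v. v $ a"] by (simp only: vector_add_component sum_component)
  moreover have "- (1 / m) + 1 / (m + n) + n / (m * (m + n)) = 0" "1 / (m + n) - m / (m * (m + n)) = 0"
    using \<open>m > 0\<close> \<open>n > 0\<close> by (simp_all add: divide_simps)
  ultimately show ?thesis
    unfolding vec_eq_iff
    by (auto simp: sum_component axis_nth_eq w_def m_def n_def algebra_simps split: sum.split)
qed

lemma eigenproj_zero_axis_centered:
  fixes G :: "'a::finite \<Rightarrow> 'a \<Rightarrow> bool" and u :: 'a
  assumes G: "simple_graph G"
  defines "z \<equiv> eigenproj (laplacian G) 0 (axis u 1) - (1 / real CARD('a)) *\<^sub>R 1"
  shows "laplacian G *v z = 0 *\<^sub>R z" and "z \<bullet> 1 = 0"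
proof -
  show "laplacian G *v z = 0 *\<^sub>R z"
    using eigenproj_eigenvector[of "laplacian G" 0 "axis u 1"] laplacian_one[of G]
    by (simp add: z_def matrix_vector_mult_diff_distrib matrix_vector_mult_scaleR)
  have "eigenproj (laplacian G) 0 (axis u 1) \<bullet> 1 = 1"
    using eigenproj_laplacian_inner_one[OF G, of 0 "axis u 1"] by (simp add: inner_axis')
  moreover have "(1 :: real^'a) \<bullet> 1 = real CARD('a)" by (simp add: inner_vec_def)
  ultimately show "z \<bullet> 1 = 0" by (simp add: z_def inner_diff_left)
qed

lemma eigenproj_join_axis_Inl:
  fixes G :: "'a::finite \<Rightarrow> 'a \<Rightarrow> bool" and H :: "'b::finite \<Rightarrow> 'b \<Rightarrow> bool" and u :: 'a
  assumes G: "simple_graph G" and H: "simple_graph H"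
  defines "m \<equiv> real CARD('a)" and "n \<equiv> real CARD('b)"
    and "Y \<equiv> \<lambda>l. eigenproj (laplacian G) l (axis u 1)"
    and "w \<equiv> (\<chi> i. case i of Inl a \<Rightarrow> real CARD('b) | Inr b \<Rightarrow> - real CARD('a)) :: real^('a + 'b)"
  shows "eigenproj (laplacian (graph_join G H)) l (axis (Inl u) 1)
    = (\<Sum>k\<in>eig_support G u - {0}. if k + n = l then extend_Inl (Y k) else 0)
      + (if n = l then extend_Inl (Y 0 - (1 / m) *\<^sub>R 1) else 0)
      + (1 / (m + n)) *\<^sub>R (if 0 = l then 1 else 0) + (1 / (m * (m + n))) *\<^sub>R (if m + n = l then w else 0)"
proof -
  define z where "z = Y 0 - (1 / m) *\<^sub>R 1"
  define S where "S = eig_support G u - {0}"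
  define L where "L = laplacian (graph_join G H)"
  have L: "symmetric_matrix L" unfolding L_def by (intro symmetric_laplacian simple_graph_join G H)
  have lin: "linear (eigenproj L l)" by (rule linear_orth_proj[OF subspace_eigenspace])
  have eig_Y: "L *v extend_Inl (Y k) = (k + n) *\<^sub>R extend_Inl (Y k)" if "k \<in> S" for k
    unfolding L_def n_def Y_def using that unfolding S_def
    by (intro laplacian_join_extend_Inl eigenproj_eigenvector) (simp add: eigenproj_laplacian_inner_one[OF G])
  have eig_z: "L *v extend_Inl z = n *\<^sub>R extend_Inl z"
    using laplacian_join_extend_Inl[of G z 0 H] eigenproj_zero_axis_centered[OF G, of u]
    by (simp add: L_def n_def z_def Y_def m_def)
  have eig_one: "L *v 1 = 0 *\<^sub>R 1" by (simp add: L_def laplacian_one)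
  have eig_w: "L *v w = (m + n) *\<^sub>R w"
    unfolding L_def w_def m_def n_def by (rule laplacian_join_bipartition)
  have "axis (Inl u) 1 = (\<Sum>k\<in>S. extend_Inl (Y k)) + extend_Inl z
      + (1 / (m + n)) *\<^sub>R 1 + (1 / (m * (m + n))) *\<^sub>R w"
    unfolding z_def S_def m_def n_def Y_def w_def by (rule axis_Inl_join_decomposition[OF G])
  then show ?thesis
    unfolding L_def[symmetric] z_def[symmetric] S_def[symmetric]
    by (simp add: linear_add[OF lin] linear_scale[OF lin] linear_sum[OF lin]
        eigenproj_of_eigenvector[OF L eig_Y] eigenproj_of_eigenvector[OF L eig_z]
        eigenproj_of_eigenvector[OF L eig_one] eigenproj_of_eigenvector[OF L eig_w] cong: sum.cong)
qed

lemma eigenproj_join_axis_Inl_nth_Inr: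
  fixes G :: "'a::finite \<Rightarrow> 'a \<Rightarrow> bool" and H :: "'b::finite \<Rightarrow> 'b \<Rightarrow> bool" and u :: 'a
  assumes G: "simple_graph G" and H: "simple_graph H"
  defines "s \<equiv> real CARD('a) + real CARD('b)"
  shows "eigenproj (laplacian (graph_join G H)) l (axis (Inl u) 1) $ Inr b
    = (if l = 0 then 1 / s else 0) - (if l = s then 1 / s else 0)"
proof -
  have "(if c then extend_Inl y else 0) $ Inr b = 0" for c and y :: "real^'a"
    by simp
  then show ?thesis
    using zero_less_card_finite[where 'a = 'a]
    by (simp add: eigenproj_join_axis_Inl[OF G H] sum_component s_def)
qed

lemma eig_support_join:
  fixes G :: "'a::finite \<Rightarrow> 'a \<Rightarrow> bool" and H :: "'b::finite \<Rightarrow> 'b \<Rightarrow> bool"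
  assumes G: "simple_graph G" and H: "simple_graph H"
  shows "eig_support (graph_join G H) (Inl u)
    = {0, real CARD('a) + real CARD('b)} \<union> (\<lambda>l. l + real CARD('b)) ` (eig_support G u - {0})
      \<union> (if connected_graph G then {} else {real CARD('b)})"
proof -
  define m where "m = real CARD('a)"
  define n where "n = real CARD('b)"
  have "m > 0" "n > 0" by (simp_all add: m_def n_def)
  let ?Y = "\<lambda>l. eigenproj (laplacian G) l (axis u 1)"
  define S where "S = eig_support G u - {0}"
  define P where "P l = eigenproj (laplacian (graph_join G H)) l (axis (Inl u) 1)" for l
  note P_eq = eigenproj_join_axis_Inl[OF G H, where u = u, folded m_def n_def S_def P_def]
  have "finite S" using finite_eig_support[OF G] by (simp add: S_def)
  note Inr = eigenproj_join_axis_Inl_nth_Inr[OF G H, where u = u, folded m_def n_def P_def]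
  have Y_nonzero: "?Y k \<noteq> 0 \<longleftrightarrow> k \<in> eig_support G u" for k
    by (simp add: eig_support_eq_spectral_support spectral_support_def)
  have "P l \<noteq> 0 \<longleftrightarrow> l \<in> {0, m + n} \<union> (\<lambda>k. k + n) ` S \<union> (if connected_graph G then {} else {n})"
    for l
  proof (cases "l = 0 \<or> l = m + n")
    case True
    with \<open>m > 0\<close> \<open>n > 0\<close> have "P l $ Inr undefined \<noteq> 0" by (auto simp: Inr)
    with True show ?thesis by auto
  next
    case False
    then have P_l: "P l = (\<Sum>k\<in>S. if k = l - n then extend_Inl (?Y k) else 0)
        + (if n = l then extend_Inl (?Y 0 - (1 / m) *\<^sub>R 1) else 0)"
      unfolding P_eq by (auto intro!: sum.cong)
    show ?thesis
    proof (cases "l = n")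
      case True
      then have "P l = extend_Inl (?Y 0 - (1 / m) *\<^sub>R 1)" using P_l \<open>finite S\<close> by (simp add: S_def)
      moreover have "?Y 0 - (1 / m) *\<^sub>R 1 = 0 \<longleftrightarrow> connected_graph G"
        using eigenproj_zero_axis_eq_iff_connected[OF G] by (simp add: m_def)
      ultimately show ?thesis using True False by (auto simp: S_def)
    next
      case False
      then have "P l = (if l - n \<in> S then extend_Inl (?Y (l - n)) else 0)"
        using \<open>finite S\<close> by (simp add: P_l)
      moreover have "l \<in> (\<lambda>k. k + n) ` S \<longleftrightarrow> l - n \<in> S" by force
      ultimately show ?thesis using False \<open>\<not> (l = 0 \<or> l = m + n)\<close> by (auto simp: Y_nonzero S_def)
    qed
  qed
  then show ?thesis
    by (auto simp: eig_support_eq_spectral_support spectral_support_def P_def m_def n_def S_def)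
qed

lemma int_eig_support_join:
  fixes G :: "'a::finite \<Rightarrow> 'a \<Rightarrow> bool" and H :: "'b::finite \<Rightarrow> 'b \<Rightarrow> bool"
  assumes G: "simple_graph G" and H: "simple_graph H"
  shows "{k::int. of_int k \<in> eig_support (graph_join G H) (Inl u) - {0}}
    = {k + int CARD('b) | k. of_int k \<in> eig_support G u - {0}} \<union> {int CARD('a) + int CARD('b)}
      \<union> (if connected_graph G then {} else {int CARD('b)})"
proof -
  let ?n = "int CARD('b)"
  have "- real CARD('b) \<notin> eig_support G u"
    using eig_support_nonneg[OF G] zero_less_card_finite[where 'a = 'b] by force
  moreover have "int CARD('a) + ?n \<noteq> 0"
    using zero_less_card_finite[where 'a = 'a] by linarith
  ultimately have iff: "of_int k \<in> eig_support (graph_join G H) (Inl u) - {0} \<longleftrightarrow>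
      k = int CARD('a) + ?n \<or> of_int (k - ?n) \<in> eig_support G u - {0} \<or> (\<not> connected_graph G \<and> k = ?n)"
    for k
    unfolding eig_support_join[OF G H]
    by (auto simp: image_iff algebra_simps intro!: bexI[of _ "of_int k - real CARD('b)"])
  show ?thesis
  proof (rule set_eqI)
    fix x :: int
    have "x \<in> {k + ?n | k. of_int k \<in> eig_support G u - {0}} \<longleftrightarrow> of_int (x - ?n) \<in> eig_support G u - {0}"
      by (rule iffI) (auto intro!: exI[of _ "x - ?n"])
    with iff[of x] show "x \<in> {k. of_int k \<in> eig_support (graph_join G H) (Inl u) - {0}} \<longleftrightarrow>
        x \<in> {k + ?n | k. of_int k \<in> eig_support G u - {0}} \<union> {int CARD('a) + ?n}
          \<union> (if connected_graph G then {} else {?n})"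
      by auto
  qed
qed

lemma eig_support_join_subset_Ints_iff:
  fixes G :: "'a::finite \<Rightarrow> 'a \<Rightarrow> bool" and H :: "'b::finite \<Rightarrow> 'b \<Rightarrow> bool"
  assumes G: "simple_graph G" and H: "simple_graph H"
  shows "eig_support (graph_join G H) (Inl u) \<subseteq> \<int> \<longleftrightarrow> eig_support G u \<subseteq> \<int>"
proof
  have shift: "k + real CARD('b) \<in> \<int> \<longleftrightarrow> k \<in> \<int>" for k
    by (metis Ints_add Ints_diff Ints_of_nat add_diff_cancel_right')
  assume X: "eig_support (graph_join G H) (Inl u) \<subseteq> \<int>"
  show "eig_support G u \<subseteq> \<int>"
  proof
    fix k assume k: "k \<in> eig_support G u"
    show "k \<in> \<int>"
    proof (cases "k = 0")
      case False
      with k X have "k + real CARD('b) \<in> \<int>" by (auto simp: eig_support_join[OF G H])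
      then show ?thesis by (simp add: shift)
    qed simp
  qed
next
  assume "eig_support G u \<subseteq> \<int>"
  then show "eig_support (graph_join G H) (Inl u) \<subseteq> \<int>"
    by (auto simp: eig_support_join[OF G H])
qed

lemma not_isolated_if_degree_notin_eig_support:
  assumes "simple_graph G" "real (degree G u) \<notin> eig_support G u"
  shows "\<not> isolated G u"
proof
  assume "isolated G u"
  then have "degree G u = 0" by (simp add: isolated_def degree_def)
  with assms zero_in_eig_support[OF assms(1), of u] show False by simp
qed

theorem theorem7:
  fixes G :: "'a::finite \<Rightarrow> 'a \<Rightarrow> bool" and H :: "'b::finite \<Rightarrow> 'b \<Rightarrow> bool"
    and u :: 'a and m n :: nat
  assumes "simple_graph G" and "simple_graph H"
    and "m = CARD('a)" and "n = CARD('b)"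
    and "real (degree G u) \<notin> eig_support G u"
  shows "((\<exists>t. lap_pst (blowup2 (graph_join G H)) (False, Inl u) (True, Inl u) t)
          \<longleftrightarrow>
          (eig_support G u \<subseteq> \<int> \<and>
           ((connected_graph G
             \<and> nu2 (int m + int n) > nu2 (int (degree G u) + int n)
             \<and> (\<forall>k::int. of_int k \<in> eig_support G u - {0} \<longrightarrow>
                   nu2 (k + int n) > nu2 (int (degree G u) + int n)))
            \<or>
            (\<not> connected_graph G \<and> \<not> isolated G u
             \<and> nu2 (int n) > nu2 (int (degree G u) + int n)
             \<and> nu2 (int m + int n) > nu2 (int (degree G u) + int n)
             \<and> (\<forall>k::int. of_int k \<in> eig_support G u - {0} \<longrightarrow>
                   nu2 (k + int n) > nu2 (int (degree G u) + int n))))))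
        \<and>
        ((\<exists>t. lap_pst (blowup2 (graph_join G H)) (False, Inl u) (True, Inl u) t) \<longrightarrow>
          (let S1 = {k + int n | k. of_int k \<in> eig_support G u - {0}}
                      \<union> {int (degree G u) + int n, int m + int n};
               S2 = {k + int n | k. of_int k \<in> eig_support G u}
                      \<union> {int (degree G u) + int n, int m + int n};
               cond1 = (connected_graph G
                  \<and> nu2 (int m + int n) > nu2 (int (degree G u) + int n)
                  \<and> (\<forall>k::int. of_int k \<in> eig_support G u - {0} \<longrightarrow>
                        nu2 (k + int n) > nu2 (int (degree G u) + int n)));
               h = (if cond1 then Gcd S1 else Gcd S2);
               \<tau> = pi / (2 * real_of_int h)
           in lap_pst (blowup2 (graph_join G H)) (False, Inl u) (True, Inl u) \<tau>
              \<and> (\<forall>t. lap_pst (blowup2 (graph_join G H)) (False, Inl u) (True, Inl u) t \<longrightarrow> \<tau> \<le> t)))"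
proof -
  let ?X = "graph_join G H" and ?D = "int (degree G u) + int n"
  have X: "simple_graph ?X" using assms(1,2) by (rule simple_graph_join)
  have deg: "int (degree ?X (Inl u)) = ?D" and "degree ?X (Inl u) > 0"
    using assms(4) by (simp_all add: degree_join_Inl)
  note N = int_eig_support_join[OF assms(1,2), of u, folded assms(3,4)]
  note Z = eig_support_join_subset_Ints_iff[OF assms(1,2), of u]
  (* The only use of the hypothesis d_u \<notin> \<sigma>_u(G): it rules out an isolated u. *)
  have "\<not> isolated G u" by (rule not_isolated_if_degree_notin_eig_support[OF assms(1,5)])
  have "0 \<in> eig_support G u" by (rule zero_in_eig_support[OF assms(1)])
  then have S: "insert ?D ({k + int n |k. of_int k \<in> eig_support G u - {0}} \<union> {int m + int n}
        \<union> (if connected_graph G then {} else {int n}))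
      = (if connected_graph G then {k + int n |k. of_int k \<in> eig_support G u - {0}}
         else {k + int n |k. of_int k \<in> eig_support G u}) \<union> {?D, int m + int n}"
    by auto
  note pst_iff = lap_pst_blowup2_iff_nu2[OF X \<open>degree ?X (Inl u) > 0\<close>, unfolded N Z deg]
  note min_time = lap_pst_blowup2_min_time[OF X \<open>degree ?X (Inl u) > 0\<close>, unfolded N deg S]
  show ?thesis
  proof (cases "connected_graph G")
    case True
    with pst_iff min_time show ?thesis unfolding Let_def by auto
  next
    case False
    with pst_iff min_time \<open>\<not> isolated G u\<close> show ?thesis unfolding Let_def by auto
  qed
qed

end
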